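(* Let $\Phi\in\mathcal{C}^2(\mathbb{R}^d)$ be bounded below and let $(T_s)_{s\ge0}$ be the transport semigroup associated to $f\mapsto -v\cdot\nabla_xf+\nabla_x\Phi(x)\cdot\nabla_vf$ on measures on $\mathbb{R}^d\times\mathbb{R}^d$. Given any $R>0$ there exists $t_1>0$ such that for every $0<s<t_1$ there are constants $\alpha,R',R_2>0$ with \[\int_{B(R')}T_s\big(\delta_{x_0}\mathbb{1}_{\{|v|\le R_2\}}\big)\,\mathrm{d}v\ \ge\ \alpha\,\mathbb{1}_{\{|x|\le R\}}\] (as measures in $x$) for every $x_0$ with $|x_0|\le R$. Moreover, for every closed interval $J\subseteq(0,t_1)$ the constants $\alpha,R',R_2$ can be chosen so that the inequality holds for all $s\in J$.
   Context: $T_sg(x,v)=g(X_{-s}(x,v),V_{-s}(x,v))$ (push-forward of $g$ by the flow of $\dot x=v$, $\dot v=-\nabla\Phi(x)$), i.e. $t\mapsto T_tg$ solves $\partial_tg+v\cdot\nabla_xg-\nabla\Phi\cdot\nabla_vg=0$. $B(r)$ is the open ball of radius $r$ centered at $0$; $\delta_{x_0}\mathbb{1}_{\{|v|\le R_2\}}$ is the Dirac mass at $x_0$ in $x$ times Lebesgue measure on $\{|v|\le R_2\}$. *)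

theory Defs
  imports "HOL-Analysis.Analysis"
begin

definition C2 :: "('a::euclidean_space \<Rightarrow> real) \<Rightarrow> bool" where
  "C2 f \<longleftrightarrow> (\<exists>f' :: 'a \<Rightarrow> ('a \<Rightarrow>\<^sub>L real). \<exists>f'' :: 'a \<Rightarrow> ('a \<Rightarrow>\<^sub>L ('a \<Rightarrow>\<^sub>L real)).
      (\<forall>x. (f has_derivative blinfun_apply (f' x)) (at x)) \<and>
      (\<forall>x. (f' has_derivative blinfun_apply (f'' x)) (at x)) \<and>
      continuous_on UNIV f'')"

definition grad :: "('a::euclidean_space \<Rightarrow> real) \<Rightarrow> 'a \<Rightarrow> 'a" where
  "grad f x = (\<Sum>b\<in>Basis. frechet_derivative f (at x) b *\<^sub>R b)"

definition is_hamiltonian_flow ::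
  "('a::euclidean_space \<Rightarrow> real) \<Rightarrow> (real \<Rightarrow> 'a \<times> 'a \<Rightarrow> 'a \<times> 'a) \<Rightarrow> bool" where
  "is_hamiltonian_flow \<Phi> F \<longleftrightarrow>
     (\<forall>z. F 0 z = z \<and>
       (\<forall>t. ((\<lambda>\<tau>. F \<tau> z) has_vector_derivative
               (snd (F t z), - grad \<Phi> (fst (F t z)))) (at t)))"

definition transport ::
  "(real \<Rightarrow> 'a \<times> 'a \<Rightarrow> 'a \<times> 'a) \<Rightarrow> real \<Rightarrow> ('a::euclidean_space \<times> 'a) measure \<Rightarrow> ('a \<times> 'a) measure" where
  "transport F s \<mu> = distr \<mu> borel (F s)"

text \<open>delta_{x0}(x) times Lebesgue measure on {|v| <= R2}.\<close>
definition dirac_ball :: "'a::euclidean_space \<Rightarrow> real \<Rightarrow> ('a \<times> 'a) measure" where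
  "dirac_ball x0 R2 = distr (density lborel (indicator (cball 0 R2))) borel (\<lambda>v. (x0, v))"

end

theory Submission
  imports Defs
begin

text \<open>For short times \<open>s\<close> the flow is a small perturbation of free transport. Starting from
  \<open>(x0, v)\<close> with \<open>\<bar>v\<bar> \<le> 3R/s\<close>, trajectories stay in a fixed ball on which \<open>\<nabla>\<Phi>\<close> is bounded by
  some \<open>M\<close> and Lipschitz with some constant \<open>K\<close>, so the position at time \<open>s\<close> is \<open>x0 + s v\<close> up to an
  error \<open>M s\<^sup>2 \<le> R/2\<close>. By Brouwer's fixed point theorem the position map \<open>v \<mapsto> X\<^sub>s(x0, v)\<close> therefore
  covers \<open>B(R)\<close>, and by Gronwall's inequality it is Lipschitz with constant \<open>exp (1 + K)\<close>,
  independently of \<open>s\<close>. A Lipschitz map enlarges Lebesgue measure at most by a fixed factor, so the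
  velocities whose trajectories end in \<open>A \<inter> B(R)\<close> form a set of measure at least a fixed multiple
  of \<open>\<bar>A \<inter> B(R)\<bar>\<close>; at time \<open>s\<close> their velocities are at most \<open>3R/s + M\<close>.\<close>

section \<open>Lebesgue measure of Lipschitz images\<close>

lemma norm_diff_le_cube:
  fixes u v y z :: "'a::euclidean_space"
  assumes side: "\<And>i. i \<in> Basis \<Longrightarrow> v \<bullet> i - u \<bullet> i = h"
    and y: "y \<in> cbox u v" and z: "z \<in> cbox u v"
  shows "norm (y - z) \<le> real DIM('a) * h"
proof -
  have "norm (y - z) \<le> (\<Sum>i\<in>Basis. \<bar>(y - z) \<bullet> i\<bar>)"
    by (rule norm_le_l1)
  also have "\<dots> \<le> (\<Sum>i\<in>(Basis::'a set). h)"
  proof (rule sum_mono)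
    fix i :: 'a assume i: "i \<in> Basis"
    then have "u \<bullet> i \<le> y \<bullet> i" "y \<bullet> i \<le> v \<bullet> i" "u \<bullet> i \<le> z \<bullet> i" "z \<bullet> i \<le> v \<bullet> i"
      using y z by (auto simp: mem_box)
    then show "\<bar>(y - z) \<bullet> i\<bar> \<le> h"
      using side[OF i] by (simp add: inner_diff_left abs_le_iff)
  qed
  finally show ?thesis by simp
qed

lemma measure_cube:
  fixes u v :: "'a::euclidean_space"
  assumes side: "\<And>i. i \<in> Basis \<Longrightarrow> v \<bullet> i - u \<bullet> i = h" and "0 \<le> h"
  shows "measure lebesgue (cbox u v) = h ^ DIM('a)"
proof -
  have "\<forall>i\<in>Basis. u \<bullet> i \<le> v \<bullet> i"
    using assms by force
  moreover have "(\<Prod>i\<in>Basis. (v - u) \<bullet> i) = (\<Prod>i\<in>(Basis::'a set). h)"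
    by (rule prod.cong) (simp_all add: inner_diff_left side)
  ultimately show ?thesis
    by (simp add: content_cbox)
qed

lemma measure_centered_cube:
  fixes a :: "'a::euclidean_space"
  assumes "0 \<le> r"
  shows "measure lebesgue (cbox (a - r *\<^sub>R One) (a + r *\<^sub>R One)) = (2 * r) ^ DIM('a)"
  using assms by (intro measure_cube) (auto simp: inner_diff_left inner_add_left)

lemma lipschitz_image_cube_subset:
  fixes f :: "'a::euclidean_space \<Rightarrow> 'b::euclidean_space"
  assumes lip: "B-lipschitz_on S f"
    and side: "\<And>i. i \<in> Basis \<Longrightarrow> v \<bullet> i - u \<bullet> i = h"
    and z: "z \<in> S \<inter> cbox u v"
  defines "r \<equiv> B * real DIM('a) * h"
  shows "f ` (S \<inter> cbox u v) \<subseteq> cbox (f z - r *\<^sub>R One) (f z + r *\<^sub>R One)"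
proof (rule image_subsetI)
  fix y assume y: "y \<in> S \<inter> cbox u v"
  show "f y \<in> cbox (f z - r *\<^sub>R One) (f z + r *\<^sub>R One)"
    unfolding mem_box
  proof (intro ballI)
    fix j :: 'b assume j: "j \<in> Basis"
    have "\<bar>(f y - f z) \<bullet> j\<bar> \<le> norm (f y - f z)"
      using j by (rule Basis_le_norm)
    also have "\<dots> \<le> B * norm (y - z)"
      using lipschitz_on_normD[OF lip] y z by blast
    also have "\<dots> \<le> r"
      unfolding r_def using norm_diff_le_cube[OF side] y z lipschitz_on_nonneg[OF lip]
      by (simp add: mult.assoc mult_left_mono)
    finally show "(f z - r *\<^sub>R One) \<bullet> j \<le> f y \<bullet> j \<and> f y \<bullet> j \<le> (f z + r *\<^sub>R One) \<bullet> j"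
      using j by (simp add: inner_diff_left inner_add_left abs_le_iff)
  qed
qed

lemma lipschitz_image_cube_enclosure:
  fixes f :: "'a::euclidean_space \<Rightarrow> 'a"
  assumes lip: "B-lipschitz_on S f"
    and side: "\<And>i. i \<in> Basis \<Longrightarrow> v \<bullet> i - u \<bullet> i = h" and "0 \<le> h"
    and "S \<inter> cbox u v \<noteq> {}"
  obtains Q where "Q \<in> lmeasurable" "f ` (S \<inter> cbox u v) \<subseteq> Q"
    "measure lebesgue Q = (2 * B * real DIM('a)) ^ DIM('a) * measure lebesgue (cbox u v)"
proof -
  obtain z where z: "z \<in> S \<inter> cbox u v"
    using \<open>S \<inter> cbox u v \<noteq> {}\<close> by blast
  define r where "r = B * real DIM('a) * h"
  have "r \<ge> 0"
    using lipschitz_on_nonneg[OF lip] \<open>0 \<le> h\<close> by (simp add: r_def)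
  have "measure lebesgue (cbox (f z - r *\<^sub>R One) (f z + r *\<^sub>R One)) = (2 * r) ^ DIM('a)"
    using \<open>r \<ge> 0\<close> by (rule measure_centered_cube)
  also have "\<dots> = (2 * B * real DIM('a)) ^ DIM('a) * measure lebesgue (cbox u v)"
    using measure_cube[OF side \<open>0 \<le> h\<close>] by (simp add: r_def power_mult_distrib)
  finally show ?thesis
    using lipschitz_image_cube_subset[OF lip side z] that unfolding r_def by blast
qed

lemma sum_measure_nonoverlapping_boxes_le:
  fixes T :: "'a::euclidean_space set"
  assumes "finite \<D>" and "\<And>K. K \<in> \<D> \<Longrightarrow> K \<noteq> {} \<and> (\<exists>u v. K = cbox u v)"
    and "pairwise (\<lambda>A B. interior A \<inter> interior B = {}) \<D>"
    and "\<Union>\<D> \<subseteq> T" and "T \<in> lmeasurable"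
  shows "(\<Sum>K\<in>\<D>. measure lebesgue K) \<le> measure lebesgue T"
proof -
  have div: "\<D> division_of \<Union>\<D>"
    using assms unfolding pairwise_def division_of_def by blast
  then have "(\<Sum>K\<in>\<D>. measure lebesgue K) = measure lebesgue (\<Union>\<D>)"
    by (rule content_division)
  also have "\<dots> \<le> measure lebesgue T"
    using assms lmeasurable_division[OF div] by (intro measure_mono_fmeasurable) auto
  finally show ?thesis .
qed

lemma bounded_subset_centered_cube:
  fixes S :: "'a::euclidean_space set"
  assumes "bounded S"
  obtains c where "c > 0" "S \<subseteq> cbox (- c *\<^sub>R One) (c *\<^sub>R One)"
proof -
  obtain c where "c > 0" and "S \<subseteq> ball 0 c"
    using assms bounded_subset_ballD by blast
  moreover have "x \<in> cbox (- c *\<^sub>R One) (c *\<^sub>R One)" if "x \<in> ball 0 c" for x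
  proof -
    have "\<forall>i\<in>Basis. \<bar>x \<bullet> i\<bar> \<le> c"
      using that Basis_le_norm[of _ x] by fastforce
    then show ?thesis
      by (auto simp: mem_box abs_le_iff minus_le_iff)
  qed
  ultimately show ?thesis
    using that by blast
qed

lemma countable_cube_cover:
  fixes S T :: "'a::euclidean_space set"
  assumes "bounded S" and "open T" and "S \<subseteq> T"
  obtains \<D> where "countable \<D>" "S \<subseteq> \<Union>\<D>" "pairwise (\<lambda>A B. interior A \<inter> interior B = {}) \<D>"
    and "\<And>K. K \<in> \<D> \<Longrightarrow> \<exists>u v h. K = cbox u v \<and> 0 \<le> h \<and> (\<forall>i\<in>Basis. v \<bullet> i - u \<bullet> i = h) \<and>
      S \<inter> K \<noteq> {} \<and> K \<subseteq> T"
proof -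
  have "\<forall>x. \<exists>e>0. x \<in> T \<longrightarrow> ball x e \<subseteq> T"
    using \<open>open T\<close> by (meson openE zero_less_one)
  then obtain d where d: "\<And>x. 0 < d x" "\<And>x. x \<in> T \<Longrightarrow> ball x (d x) \<subseteq> T"
    by metis
  then have gauge: "gauge (\<lambda>x. ball x (d x))"
    by (simp add: gauge_def)
  obtain c where "c > 0" and cube: "S \<subseteq> cbox (- c *\<^sub>R One) (c *\<^sub>R One)"
    using bounded_subset_centered_cube[OF \<open>bounded S\<close>] by blast
  have "box (- c *\<^sub>R One) (c *\<^sub>R One) \<noteq> {}"
    using \<open>c > 0\<close> by (simp add: box_ne_empty)
  obtain \<D> where "countable \<D>"
     and boxes: "\<And>K. K \<in> \<D> \<Longrightarrow> interior K \<noteq> {} \<and> (\<exists>u v. K = cbox u v)"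
     and pw: "pairwise (\<lambda>A B. interior A \<inter> interior B = {}) \<D>"
     and small: "\<And>K. K \<in> \<D> \<Longrightarrow> \<exists>x \<in> S \<inter> K. K \<subseteq> ball x (d x)"
     and side: "\<And>u v. cbox u v \<in> \<D> \<Longrightarrow>
       \<exists>n. \<forall>i \<in> Basis. v \<bullet> i - u \<bullet> i = ((c *\<^sub>R One) \<bullet> i - (- c *\<^sub>R One) \<bullet> i) / 2^n"
     and "S \<subseteq> \<Union>\<D>"
    by (rule covering_lemma[OF cube \<open>box _ _ \<noteq> {}\<close> gauge]) blast
  have "\<exists>u v h. K = cbox u v \<and> 0 \<le> h \<and> (\<forall>i\<in>Basis. v \<bullet> i - u \<bullet> i = h) \<and>
      S \<inter> K \<noteq> {} \<and> K \<subseteq> T" if "K \<in> \<D>" for K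
  proof -
    obtain u v where K: "K = cbox u v"
      using boxes \<open>K \<in> \<D>\<close> by blast
    then obtain n where "\<forall>i\<in>Basis. v \<bullet> i - u \<bullet> i = 2 * c / 2 ^ n"
      using side[of u v] \<open>K \<in> \<D>\<close> by auto
    moreover obtain z where "z \<in> S \<inter> K" "K \<subseteq> ball z (d z)"
      using small \<open>K \<in> \<D>\<close> by blast
    moreover have "2 * c / 2 ^ n \<ge> 0"
      using \<open>c > 0\<close> by simp
    ultimately show ?thesis
      using K d(2) \<open>S \<subseteq> T\<close> by blast
  qed
  then show ?thesis
    using that[OF \<open>countable \<D>\<close> \<open>S \<subseteq> \<Union>\<D>\<close> pw] by blast
qed

lemma lipschitz_image_subset_fmeasurable:
  fixes f :: "'a::euclidean_space \<Rightarrow> 'a"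
  assumes lip: "B-lipschitz_on S f" and "bounded S"
    and T: "open T" "S \<subseteq> T" "T \<in> lmeasurable"
  defines "C \<equiv> (2 * B * real DIM('a)) ^ DIM('a)"
  shows "\<exists>W\<in>lmeasurable. f ` S \<subseteq> W \<and> measure lebesgue W \<le> C * measure lebesgue T"
proof -
  obtain \<D> where "countable \<D>" "S \<subseteq> \<Union>\<D>" and pw: "pairwise (\<lambda>A B. interior A \<inter> interior B = {}) \<D>"
    and cover: "\<And>K. K \<in> \<D> \<Longrightarrow> \<exists>u v h. K = cbox u v \<and> 0 \<le> h \<and> (\<forall>i\<in>Basis. v \<bullet> i - u \<bullet> i = h) \<and>
      S \<inter> K \<noteq> {} \<and> K \<subseteq> T"
    by (rule countable_cube_cover[OF \<open>bounded S\<close> T(1,2)]) blast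
  have "\<exists>Q. Q \<in> lmeasurable \<and> f ` (S \<inter> K) \<subseteq> Q \<and> measure lebesgue Q = C * measure lebesgue K"
    if "K \<in> \<D>" for K
    using cover[OF that] lipschitz_image_cube_enclosure[OF lip] unfolding C_def by metis
  then obtain Q where Q: "\<And>K. K \<in> \<D> \<Longrightarrow> Q K \<in> lmeasurable"
    "\<And>K. K \<in> \<D> \<Longrightarrow> f ` (S \<inter> K) \<subseteq> Q K"
    "\<And>K. K \<in> \<D> \<Longrightarrow> measure lebesgue (Q K) = C * measure lebesgue K"
    by metis
  have image: "f ` S \<subseteq> (\<Union>K\<in>\<D>. Q K)"
    using \<open>S \<subseteq> \<Union>\<D>\<close> Q(2) by blast
  have bound: "measure lebesgue (\<Union>K\<in>\<D>'. Q K) \<le> C * measure lebesgue T"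
    if "\<D>' \<subseteq> \<D>" "finite \<D>'" for \<D>'
  proof -
    have "measure lebesgue (\<Union>K\<in>\<D>'. Q K) \<le> (\<Sum>K\<in>\<D>'. measure lebesgue (Q K))"
      using that Q(1) by (intro measure_UNION_le) auto
    also have "\<dots> = C * (\<Sum>K\<in>\<D>'. measure lebesgue K)"
      unfolding sum_distrib_left using that Q(3) by (intro sum.cong) auto
    also have "\<dots> \<le> C * measure lebesgue T"
    proof (intro mult_left_mono sum_measure_nonoverlapping_boxes_le)
      show "pairwise (\<lambda>A B. interior A \<inter> interior B = {}) \<D>'"
        using pw \<open>\<D>' \<subseteq> \<D>\<close> by (rule pairwise_subset)
      show "K \<noteq> {} \<and> (\<exists>u v. K = cbox u v)" if "K \<in> \<D>'" for K
        using cover that \<open>\<D>' \<subseteq> \<D>\<close> by blast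
      show "\<Union>\<D>' \<subseteq> T"
        using cover \<open>\<D>' \<subseteq> \<D>\<close> by blast
    qed (use lipschitz_on_nonneg[OF lip] T \<open>finite \<D>'\<close> in \<open>auto simp: C_def\<close>)
    finally show ?thesis .
  qed
  show ?thesis
  proof (intro bexI conjI)
    show "(\<Union>K\<in>\<D>. Q K) \<in> lmeasurable"
      using \<open>countable \<D>\<close> Q(1) bound by (rule fmeasurable_UN_bound)
    show "measure lebesgue (\<Union>K\<in>\<D>. Q K) \<le> C * measure lebesgue T"
      using \<open>countable \<D>\<close> Q(1) bound by (rule measure_UN_bound)
  qed (fact image)
qed

lemma measure_le_lipschitz_image:
  fixes f :: "'a::euclidean_space \<Rightarrow> 'a"
  assumes lip: "B-lipschitz_on S f" and "bounded S" and S: "S \<in> lmeasurable"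
    and Y: "Y \<in> lmeasurable" "Y \<subseteq> f ` S"
  shows "measure lebesgue Y \<le> (2 * B * real DIM('a)) ^ DIM('a) * measure lebesgue S"
proof (rule field_le_epsilon)
  fix e :: real assume "0 < e"
  define C where "C = (2 * B * real DIM('a)) ^ DIM('a)"
  have "C \<ge> 0"
    using lipschitz_on_nonneg[OF lip] by (simp add: C_def)
  obtain T where T: "open T" "S \<subseteq> T" "T - S \<in> lmeasurable" "emeasure lebesgue (T - S) < e / (C + 1)"
  proof (rule sets_lebesgue_outer_open)
    show "S \<in> sets lebesgue"
      using S by (rule fmeasurableD)
    show "e / (C + 1) > 0"
      using \<open>0 < e\<close> \<open>C \<ge> 0\<close> by simp
  qed
  have "T \<in> lmeasurable"
    using fmeasurable_Diff_D[OF T(3) S T(2)] .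
  then have "measure lebesgue T - measure lebesgue S = measure lebesgue (T - S)"
    using S T(2) by (subst measure_Diff) (auto simp: fmeasurable_def)
  also have "\<dots> \<le> e / (C + 1)"
    using T(3,4) by (simp add: emeasure_eq_measure2 ennreal_less_iff)
  finally have measure_T: "measure lebesgue T \<le> measure lebesgue S + e / (C + 1)"
    by simp
  obtain W where W: "W \<in> lmeasurable" "f ` S \<subseteq> W" "measure lebesgue W \<le> C * measure lebesgue T"
    using lipschitz_image_subset_fmeasurable[OF lip \<open>bounded S\<close> T(1,2) \<open>T \<in> lmeasurable\<close>]
    unfolding C_def by blast
  have "measure lebesgue Y \<le> measure lebesgue W"
    using Y W by (intro measure_mono_fmeasurable) auto
  also have "\<dots> \<le> C * (measure lebesgue S + e / (C + 1))"
    using W(3) measure_T \<open>C \<ge> 0\<close> by (meson mult_left_mono order_trans)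
  also have "\<dots> \<le> C * measure lebesgue S + e"
    using \<open>C \<ge> 0\<close> \<open>0 < e\<close> by (simp add: distrib_left field_simps)
  finally show "measure lebesgue Y \<le> C * measure lebesgue S + e" .
qed

section \<open>Potentials of class \<open>C\<^sup>2\<close>\<close>

lemma grad_eq_sum_Basis:
  assumes "(f has_derivative blinfun_apply L) (at x)"
  shows "grad f x = (\<Sum>b\<in>Basis. blinfun_apply L b *\<^sub>R b)"
  unfolding grad_def using frechet_derivative_at[OF assms] by simp

lemma norm_sum_Basis_blinfun_le:
  fixes L :: "'a::euclidean_space \<Rightarrow>\<^sub>L real"
  shows "norm (\<Sum>b\<in>Basis. blinfun_apply L b *\<^sub>R b) \<le> real DIM('a) * norm L"
proof -
  have "norm (\<Sum>b\<in>Basis. blinfun_apply L b *\<^sub>R b) \<le> (\<Sum>b\<in>(Basis::'a set). norm L)"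
  proof (rule order_trans[OF norm_sum sum_mono])
    fix b :: 'a assume "b \<in> Basis"
    then show "norm (blinfun_apply L b *\<^sub>R b) \<le> norm L"
      using norm_blinfun[of L b] by simp
  qed
  then show ?thesis by simp
qed

lemma C2_grad_lipschitz_on_cball:
  fixes \<Phi> :: "'a::euclidean_space \<Rightarrow> real"
  assumes "C2 \<Phi>"
  obtains K where "K-lipschitz_on (cball 0 \<rho>) (grad \<Phi>)"
proof -
  obtain f' :: "'a \<Rightarrow> ('a \<Rightarrow>\<^sub>L real)" and f'' :: "'a \<Rightarrow> ('a \<Rightarrow>\<^sub>L ('a \<Rightarrow>\<^sub>L real))"
    where d1: "\<And>x. (\<Phi> has_derivative blinfun_apply (f' x)) (at x)"
      and d2: "\<And>x. (f' has_derivative blinfun_apply (f'' x)) (at x)"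
      and c2: "continuous_on UNIV f''"
    using assms unfolding C2_def by blast
  have "compact (f'' ` cball 0 \<rho>)"
    using c2 by (intro compact_continuous_image) (auto intro: continuous_on_subset)
  then obtain N where N: "N \<ge> 0" "\<And>x. x \<in> cball 0 \<rho> \<Longrightarrow> norm (f'' x) \<le> N"
    using compact_imp_bounded bounded_pos by (metis imageI less_imp_le)
  have f'_lip: "N-lipschitz_on (cball 0 \<rho>) f'"
  proof (rule bounded_derivative_imp_lipschitz)
    show "(f' has_derivative blinfun_apply (f'' x)) (at x within cball 0 \<rho>)" for x
      using d2 by (rule has_derivative_at_withinI)
    show "onorm (blinfun_apply (f'' x)) \<le> N" if "x \<in> cball 0 \<rho>" for x
      using N(2)[OF that] by (simp add: norm_blinfun.rep_eq)
  qed (use N in auto)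
  have "(real DIM('a) * N)-lipschitz_on (cball 0 \<rho>) (grad \<Phi>)"
  proof (rule lipschitz_onI)
    fix x y :: 'a assume xy: "x \<in> cball 0 \<rho>" "y \<in> cball 0 \<rho>"
    have "grad \<Phi> x - grad \<Phi> y = (\<Sum>b\<in>Basis. blinfun_apply (f' x - f' y) b *\<^sub>R b)"
      by (simp add: grad_eq_sum_Basis[OF d1] blinfun.diff_left scaleR_diff_left sum_subtractf)
    also have "norm \<dots> \<le> real DIM('a) * norm (f' x - f' y)"
      by (rule norm_sum_Basis_blinfun_le)
    also have "\<dots> \<le> real DIM('a) * (N * norm (x - y))"
      using lipschitz_on_normD[OF f'_lip xy] by (simp add: mult_left_mono)
    finally show "dist (grad \<Phi> x) (grad \<Phi> y) \<le> real DIM('a) * N * dist x y"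
      by (simp add: dist_norm)
  qed (use N in simp)
  then show ?thesis ..
qed

lemma C2_grad_bounded_on_cball:
  fixes \<Phi> :: "'a::euclidean_space \<Rightarrow> real"
  assumes "C2 \<Phi>"
  obtains M where "M \<ge> 0" "\<And>x. x \<in> cball 0 \<rho> \<Longrightarrow> norm (grad \<Phi> x) \<le> M"
proof -
  obtain K where "K-lipschitz_on (cball 0 \<rho>) (grad \<Phi>)"
    using C2_grad_lipschitz_on_cball[OF assms] .
  then have "compact (grad \<Phi> ` cball 0 \<rho>)"
    by (intro compact_continuous_image lipschitz_on_continuous_on) auto
  then show ?thesis
    using compact_imp_bounded bounded_pos that by (metis imageI less_imp_le)
qed

section \<open>The Hamiltonian flow\<close>

lemma hamiltonian_flow_start:
  "is_hamiltonian_flow \<Phi> F \<Longrightarrow> F 0 z = z"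
  unfolding is_hamiltonian_flow_def by blast

lemma hamiltonian_flow_has_vector_derivative:
  "is_hamiltonian_flow \<Phi> F \<Longrightarrow>
     ((\<lambda>\<tau>. F \<tau> z) has_vector_derivative (snd (F t z), - grad \<Phi> (fst (F t z)))) (at t)"
  unfolding is_hamiltonian_flow_def by blast

lemma hamiltonian_flow_fst_has_vector_derivative:
  assumes "is_hamiltonian_flow \<Phi> F"
  shows "((\<lambda>\<tau>. fst (F \<tau> z)) has_vector_derivative snd (F t z)) (at t)"
  using has_derivative_fst[OF hamiltonian_flow_has_vector_derivative[OF assms, unfolded has_vector_derivative_def]]
  by (simp add: has_vector_derivative_def)

lemma hamiltonian_flow_snd_has_vector_derivative:
  assumes "is_hamiltonian_flow \<Phi> F"
  shows "((\<lambda>\<tau>. snd (F \<tau> z)) has_vector_derivative - grad \<Phi> (fst (F t z))) (at t)"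
  using has_derivative_snd[OF hamiltonian_flow_has_vector_derivative[OF assms, unfolded has_vector_derivative_def]]
  by (simp add: has_vector_derivative_def)

lemma continuous_on_hamiltonian_flow_time:
  assumes "is_hamiltonian_flow \<Phi> F"
  shows "continuous_on S (\<lambda>\<tau>. F \<tau> z)"
  using hamiltonian_flow_has_vector_derivative[OF assms]
  by (meson continuous_at_imp_continuous_on has_vector_derivative_continuous)

lemma norm_diff_le_vector_derivative_bound:
  fixes f :: "real \<Rightarrow> 'b::real_normed_vector"
  assumes "a \<le> b"
    and f': "\<And>t. t \<in> {a..b} \<Longrightarrow> (f has_vector_derivative f' t) (at t)"
    and bound: "\<And>t. t \<in> {a..b} \<Longrightarrow> norm (f' t) \<le> B"
  shows "norm (f b - f a) \<le> B * (b - a)"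
proof -
  have "norm (f b - f a) \<le> B * norm (b - a)"
  proof (rule differentiable_bound[where S="{a..b}" and f'="\<lambda>t h. h *\<^sub>R f' t"])
    show "(f has_derivative (\<lambda>h. h *\<^sub>R f' t)) (at t within {a..b})" if "t \<in> {a..b}" for t
      using f'[OF that] unfolding has_vector_derivative_def by (rule has_derivative_at_withinI)
    show "onorm (\<lambda>h. h *\<^sub>R f' t) \<le> B" if "t \<in> {a..b}" for t
      by (rule onorm_le) (use bound[OF that] in \<open>simp, metis abs_ge_zero mult.commute mult_left_mono\<close>)
  qed (use assms in auto)
  then show ?thesis
    using assms by simp
qed

text \<open>Gronwall's inequality, via monotonicity of \<open>exp (-2Lt) \<parallel>D t\<parallel>\<^sup>2\<close>.\<close>
lemma norm_le_exp_of_derivative_bound: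
  fixes D :: "real \<Rightarrow> 'b::real_inner"
  assumes "0 \<le> T"
    and D': "\<And>t. t \<in> {0..T} \<Longrightarrow> (D has_vector_derivative D' t) (at t)"
    and bound: "\<And>t. t \<in> {0..T} \<Longrightarrow> norm (D' t) \<le> L * norm (D t)"
  shows "norm (D T) \<le> norm (D 0) * exp (L * T)"
proof -
  define h where "h t = exp (- (2 * L) * t) * (D t \<bullet> D t)" for t
  have "h T \<le> h 0"
  proof (rule DERIV_nonpos_imp_nonincreasing[OF \<open>0 \<le> T\<close>])
    fix t assume "0 \<le> t" "t \<le> T"
    then have t: "t \<in> {0..T}" by simp
    have "((\<lambda>t. D t \<bullet> D t) has_derivative (\<lambda>x. D t \<bullet> (x *\<^sub>R D' t) + (x *\<^sub>R D' t) \<bullet> D t)) (at t)"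
      using D'[OF t] unfolding has_vector_derivative_def by (intro has_derivative_inner)
    then have "((\<lambda>t. D t \<bullet> D t) has_real_derivative 2 * (D t \<bullet> D' t)) (at t)"
      unfolding has_field_derivative_def
      by (rule has_derivative_eq_rhs) (auto simp: inner_commute algebra_simps)
    then have "(h has_real_derivative
        exp (- (2 * L) * t) * (2 * (D t \<bullet> D' t) - 2 * L * (D t \<bullet> D t))) (at t)"
      unfolding h_def by (auto intro!: derivative_eq_intros simp: algebra_simps)
    moreover have "D t \<bullet> D' t \<le> L * (D t \<bullet> D t)"
    proof -
      have "D t \<bullet> D' t \<le> norm (D t) * norm (D' t)"
        by (rule norm_cauchy_schwarz)
      also have "\<dots> \<le> norm (D t) * (L * norm (D t))"
        using bound[OF t] by (simp add: mult_left_mono)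
      finally show ?thesis
        by (simp add: power2_norm_eq_inner[symmetric] power2_eq_square algebra_simps)
    qed
    ultimately show "\<exists>y. (h has_real_derivative y) (at t) \<and> y \<le> 0"
      by (intro exI conjI) (auto intro!: mult_nonneg_nonpos)
  qed
  then have "norm (D T) ^ 2 \<le> (norm (D 0) * exp (L * T)) ^ 2"
    by (simp add: h_def power2_norm_eq_inner[symmetric] power_mult_distrib exp_minus field_simps
        flip: exp_add exp_double)
  then show ?thesis
    by (rule power2_le_imp_le) simp
qed

lemma norm_fst_le_norm: "norm (fst z) \<le> norm z"
  using norm_fst_le[of "fst z" "snd z"] by simp

lemma norm_snd_le_norm: "norm (snd z) \<le> norm z"
  using norm_snd_le[of "snd z" "fst z"] by simp

lemma hamiltonian_flow_dist_le:
  fixes \<Phi> :: "'a::euclidean_space \<Rightarrow> real"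
  assumes flow: "is_hamiltonian_flow \<Phi> F"
    and lip: "K-lipschitz_on (cball 0 \<rho>) (grad \<Phi>)" and "0 \<le> T"
    and confined: "\<And>t. t \<in> {0..T} \<Longrightarrow> norm (fst (F t z1)) \<le> \<rho> \<and> norm (fst (F t z2)) \<le> \<rho>"
  shows "dist (F T z1) (F T z2) \<le> dist z1 z2 * exp ((1 + K) * T)"
proof -
  define D where "D t = F t z1 - F t z2" for t
  define D' where "D' t = (snd (F t z1) - snd (F t z2), - (grad \<Phi> (fst (F t z1)) - grad \<Phi> (fst (F t z2))))"
    for t
  have "norm (D T) \<le> norm (D 0) * exp ((1 + K) * T)"
  proof (rule norm_le_exp_of_derivative_bound[OF \<open>0 \<le> T\<close>])
    show "(D has_vector_derivative D' t) (at t)" for t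
      using has_vector_derivative_diff[OF hamiltonian_flow_has_vector_derivative[OF flow]
          hamiltonian_flow_has_vector_derivative[OF flow]]
      unfolding D_def D'_def by (simp add: algebra_simps)
    fix t assume "t \<in> {0..T}"
    have "norm (grad \<Phi> (fst (F t z1)) - grad \<Phi> (fst (F t z2))) \<le> K * norm (fst (D t))"
      using lipschitz_on_normD[OF lip] confined[OF \<open>t \<in> {0..T}\<close>] by (simp add: D_def)
    also have "\<dots> \<le> K * norm (D t)"
      using lipschitz_on_nonneg[OF lip] by (simp add: mult_left_mono norm_fst_le_norm)
    finally have "norm (D' t) \<le> norm (snd (D t)) + K * norm (D t)"
      unfolding D'_def D_def by (smt (verit) norm_Pair_le norm_minus_cancel snd_diff)
    also have "\<dots> \<le> (1 + K) * norm (D t)"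
      by (simp add: distrib_right norm_snd_le_norm)
    finally show "norm (D' t) \<le> (1 + K) * norm (D t)" .
  qed
  then show ?thesis
    by (simp add: D_def dist_norm hamiltonian_flow_start[OF flow])
qed

lemma hamiltonian_flow_lipschitz_on:
  fixes \<Phi> :: "'a::euclidean_space \<Rightarrow> real"
  assumes flow: "is_hamiltonian_flow \<Phi> F"
    and lip: "K-lipschitz_on (cball 0 \<rho>) (grad \<Phi>)" and "0 \<le> s"
    and confined: "\<And>z t. z \<in> Z \<Longrightarrow> t \<in> {0..s} \<Longrightarrow> norm (fst (F t z)) \<le> \<rho>"
  shows "(exp ((1 + K) * s))-lipschitz_on Z (F s)"
proof (rule lipschitz_onI)
  show "dist (F s z1) (F s z2) \<le> exp ((1 + K) * s) * dist z1 z2" if "z1 \<in> Z" "z2 \<in> Z" for z1 z2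
    using hamiltonian_flow_dist_le[OF flow lip \<open>0 \<le> s\<close>] confined that by (simp add: mult.commute)
qed simp

lemma continuous_bound_bootstrap:
  fixes p :: "real \<Rightarrow> real"
  assumes cont: "continuous_on {0..T} p" and "p 0 < \<rho>"
    and step: "\<And>\<tau>. \<tau> \<in> {0..T} \<Longrightarrow> (\<forall>t\<in>{0..\<tau>}. p t \<le> \<rho>) \<Longrightarrow> p \<tau> < \<rho>"
  shows "\<forall>t\<in>{0..T}. p t < \<rho>"
proof (rule ccontr)
  define S where "S = {0..T} \<inter> p -` {\<rho>..}"
  assume "\<not> (\<forall>t\<in>{0..T}. p t < \<rho>)"
  then have "S \<noteq> {}"
    by (force simp: S_def)
  moreover have "closed S"
    unfolding S_def by (rule continuous_closed_preimage[OF cont]) auto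
  moreover have "bdd_below S"
    by (rule bdd_belowI[of _ 0]) (auto simp: S_def)
  ultimately have "Inf S \<in> S"
    using closed_contains_Inf by blast
  define \<tau> where "\<tau> = Inf S"
  have \<tau>: "\<tau> \<in> {0..T}" "\<rho> \<le> p \<tau>"
    using \<open>Inf S \<in> S\<close> by (auto simp: \<tau>_def S_def)
  have below: "p t < \<rho>" if "t \<in> {0..<\<tau>}" for t
  proof -
    have "t \<notin> S"
      using that cInf_lower[OF _ \<open>bdd_below S\<close>, of t] by (auto simp: \<tau>_def)
    then show ?thesis
      using that \<tau> by (auto simp: S_def)
  qed
  have "\<tau> \<noteq> 0"
    using \<tau> \<open>p 0 < \<rho>\<close> by auto
  then have "closure {0..<\<tau>} = {0..\<tau>}"
    using \<tau> by simp
  moreover have "closure {0..<\<tau>} \<subseteq> {0..T} \<inter> p -` {..\<rho>}"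
    using below \<tau> by (intro closure_minimal continuous_closed_preimage[OF cont]) fastforce+
  ultimately have "p \<tau> < \<rho>"
    using step[OF \<tau>(1)] by auto
  then show False
    using \<tau> by simp
qed

lemma norm_fst_le_add_dist:
  fixes a b :: "'a::real_normed_vector \<times> 'b::real_normed_vector"
  shows "norm (fst a) \<le> norm (fst b) + dist a b"
  using norm_triangle_sub[of "fst a" "fst b"] norm_fst_le_norm[of "a - b"]
  by (simp add: dist_norm)

lemma hamiltonian_flow_confined_near:
  fixes \<Phi> :: "'a::euclidean_space \<Rightarrow> real"
  assumes flow: "is_hamiltonian_flow \<Phi> F"
    and lip: "K-lipschitz_on (cball 0 (\<rho> + 1)) (grad \<Phi>)" and "0 \<le> s"
    and confined: "\<And>t. t \<in> {0..s} \<Longrightarrow> norm (fst (F t z)) \<le> \<rho>"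
    and near: "dist z' z < exp (- ((1 + K) * s))"
  shows "\<forall>t\<in>{0..s}. norm (fst (F t z')) < \<rho> + 1"
proof (rule continuous_bound_bootstrap)
  show "continuous_on {0..s} (\<lambda>t. norm (fst (F t z')))"
    by (intro continuous_intros continuous_on_hamiltonian_flow_time[OF flow])
  have "exp (- ((1 + K) * s)) \<le> 1"
    using lipschitz_on_nonneg[OF lip] \<open>0 \<le> s\<close> by simp
  then have "dist z' z < 1"
    using near by linarith
  moreover have "norm (fst z) \<le> \<rho>"
    using confined[of 0] \<open>0 \<le> s\<close> by (simp add: hamiltonian_flow_start[OF flow])
  ultimately show "norm (fst (F 0 z')) < \<rho> + 1"
    using norm_fst_le_add_dist[of z' z] by (simp add: hamiltonian_flow_start[OF flow])
  fix \<tau> assume \<tau>: "\<tau> \<in> {0..s}" and confined': "\<forall>t\<in>{0..\<tau>}. norm (fst (F t z')) \<le> \<rho> + 1"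
  have "dist (F \<tau> z') (F \<tau> z) \<le> dist z' z * exp ((1 + K) * \<tau>)"
  proof (rule hamiltonian_flow_dist_le[OF flow lip])
    fix t assume "t \<in> {0..\<tau>}"
    then show "norm (fst (F t z')) \<le> \<rho> + 1 \<and> norm (fst (F t z)) \<le> \<rho> + 1"
      using \<tau> confined' confined[of t] by force
  qed (use \<tau> in simp)
  also have "\<dots> \<le> dist z' z * exp ((1 + K) * s)"
    using \<tau> lipschitz_on_nonneg[OF lip] by (intro mult_left_mono) (auto intro: mult_left_mono)
  also have "\<dots> < exp (- ((1 + K) * s)) * exp ((1 + K) * s)"
    using near by (rule mult_strict_right_mono) simp
  also have "\<dots> = 1"
    by (simp flip: exp_add)
  finally show "norm (fst (F \<tau> z')) < \<rho> + 1"
    using norm_fst_le_add_dist[of "F \<tau> z'" "F \<tau> z"] confined[OF \<tau>] by linarith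
qed

lemma continuous_on_hamiltonian_flow:
  fixes \<Phi> :: "'a::euclidean_space \<Rightarrow> real"
  assumes "C2 \<Phi>" and flow: "is_hamiltonian_flow \<Phi> F" and "0 \<le> s"
  shows "continuous_on UNIV (F s)"
  unfolding continuous_on_eq_continuous_at[OF open_UNIV]
proof
  fix z :: "'a \<times> 'a"
  have "compact ((\<lambda>t. fst (F t z)) ` {0..s})"
    by (intro compact_continuous_image continuous_on_fst continuous_on_hamiltonian_flow_time[OF flow]) simp
  then obtain \<rho> where \<rho>: "\<And>t. t \<in> {0..s} \<Longrightarrow> norm (fst (F t z)) \<le> \<rho>"
    using compact_imp_bounded bounded_iff by (metis imageI)
  obtain K where lip: "K-lipschitz_on (cball 0 (\<rho> + 1)) (grad \<Phi>)"
    using C2_grad_lipschitz_on_cball[OF \<open>C2 \<Phi>\<close>] .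
  define \<delta> where "\<delta> = exp (- ((1 + K) * s))"
  have "(exp ((1 + K) * s))-lipschitz_on (ball z \<delta>) (F s)"
  proof (rule hamiltonian_flow_lipschitz_on[OF flow lip \<open>0 \<le> s\<close>])
    show "norm (fst (F t z')) \<le> \<rho> + 1" if "z' \<in> ball z \<delta>" "t \<in> {0..s}" for z' t
      using hamiltonian_flow_confined_near[OF flow lip \<open>0 \<le> s\<close> \<rho>, of z'] that
      by (force simp: \<delta>_def dist_commute)
  qed
  then have "continuous_on (ball z \<delta>) (F s)"
    by (rule lipschitz_on_continuous_on)
  then show "isCont (F s) z"
    by (simp add: continuous_on_eq_continuous_at \<delta>_def)
qed

context
  fixes \<Phi> :: "'a::euclidean_space \<Rightarrow> real" and F z \<rho> M \<tau>
  assumes flow: "is_hamiltonian_flow \<Phi> F"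
    and grad_bound: "\<And>x. x \<in> cball 0 \<rho> \<Longrightarrow> norm (grad \<Phi> x) \<le> M"
    and "0 \<le> \<tau>"
    and confined: "\<And>t. t \<in> {0..\<tau>} \<Longrightarrow> norm (fst (F t z)) \<le> \<rho>"
begin

lemma hamiltonian_flow_velocity_estimate:
  "norm (snd (F t z) - snd z) \<le> M * t" if "t \<in> {0..\<tau>}"
proof -
  have "norm (snd (F t z) - snd (F 0 z)) \<le> M * (t - 0)"
  proof (rule norm_diff_le_vector_derivative_bound)
    show "((\<lambda>u. snd (F u z)) has_vector_derivative - grad \<Phi> (fst (F u z))) (at u)" for u
      by (rule hamiltonian_flow_snd_has_vector_derivative[OF flow])
    show "norm (- grad \<Phi> (fst (F u z))) \<le> M" if "u \<in> {0..t}" for u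
      using grad_bound confined that \<open>t \<in> {0..\<tau>}\<close> by simp
  qed (use that in simp)
  then show ?thesis
    by (simp add: hamiltonian_flow_start[OF flow])
qed

lemma hamiltonian_flow_position_estimate:
  "norm (fst (F \<tau> z) - fst z - \<tau> *\<^sub>R snd z) \<le> M * \<tau>\<^sup>2"
proof -
  have "M \<ge> 0"
    using grad_bound[of "fst z"] confined[of 0] \<open>0 \<le> \<tau>\<close> hamiltonian_flow_start[OF flow]
    by (auto intro: order_trans[OF norm_ge_zero])
  let ?g = "\<lambda>u. fst (F u z) - fst z - u *\<^sub>R snd z"
  have "norm (?g \<tau> - ?g 0) \<le> (M * \<tau>) * (\<tau> - 0)"
  proof (rule norm_diff_le_vector_derivative_bound)
    show "(?g has_vector_derivative snd (F u z) - snd z) (at u)" for u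
      using has_vector_derivative_diff[OF has_vector_derivative_diff[OF
          hamiltonian_flow_fst_has_vector_derivative[OF flow] has_vector_derivative_const]
          has_vector_derivative_scaleR[OF DERIV_ident has_vector_derivative_const]]
      by simp
    show "norm (snd (F u z) - snd z) \<le> M * \<tau>" if "u \<in> {0..\<tau>}" for u
      using hamiltonian_flow_velocity_estimate[OF that] \<open>M \<ge> 0\<close> that
      by (meson atLeastAtMost_iff mult_left_mono order_trans)
  qed (use \<open>0 \<le> \<tau>\<close> in simp)
  then show ?thesis
    by (simp add: hamiltonian_flow_start[OF flow] power2_eq_square mult.assoc)
qed

end

section \<open>Short-time behaviour and the lower bound\<close>

lemma cball_subset_image_near_affine:
  fixes f :: "'a::euclidean_space \<Rightarrow> 'a"
  assumes cont: "continuous_on (cball 0 r) f" and "0 < r" "0 < s"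
    and near: "\<And>v. v \<in> cball 0 r \<Longrightarrow> norm (f v - c - s *\<^sub>R v) \<le> \<epsilon>"
  shows "cball c (s * r - \<epsilon>) \<subseteq> f ` cball 0 r"
proof
  fix y assume y: "y \<in> cball c (s * r - \<epsilon>)"
  define h where "h v = v + (1 / s) *\<^sub>R (y - f v)" for v
  have "h v \<in> cball 0 r" if v: "v \<in> cball 0 r" for v
  proof -
    have "h v = (1 / s) *\<^sub>R ((y - c) - (f v - c - s *\<^sub>R v))"
      using \<open>0 < s\<close> by (simp add: h_def algebra_simps)
    then have "norm (h v) = (1 / s) * norm ((y - c) - (f v - c - s *\<^sub>R v))"
      using \<open>0 < s\<close> by (simp only: norm_scaleR) simp
    also have "\<dots> \<le> (1 / s) * (norm (y - c) + norm (f v - c - s *\<^sub>R v))"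
      using \<open>0 < s\<close> by (intro mult_left_mono norm_triangle_ineq4) simp
    also have "\<dots> \<le> (1 / s) * ((s * r - \<epsilon>) + \<epsilon>)"
      using y near[OF v] \<open>0 < s\<close> by (intro mult_left_mono add_mono) (auto simp: dist_norm norm_minus_commute)
    finally show ?thesis
      using \<open>0 < s\<close> by simp
  qed
  moreover have "continuous_on (cball 0 r) h"
    unfolding h_def by (intro continuous_intros cont)
  ultimately obtain v where "v \<in> cball 0 r" "h v = v" \<comment> \<open>then \<open>f v = y\<close>\<close>
    using brouwer_ball[OF \<open>0 < r\<close>] by (metis Pi_I)
  then show "y \<in> f ` cball 0 r"
    using \<open>0 < s\<close> by (force simp: h_def)
qed

lemma borel_slice_preimage:
  fixes G :: "'a::euclidean_space \<times> 'b::euclidean_space \<Rightarrow> 'c::euclidean_space"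
  assumes "G \<in> borel_measurable borel" and "X \<in> sets borel"
  shows "{v. G (x0, v) \<in> X} \<in> sets borel"
proof -
  have "Pair x0 \<in> borel_measurable borel"
    by (intro borel_measurable_continuous_onI continuous_intros)
  from measurable_sets[OF measurable_compose[OF this assms(1)] assms(2)] show ?thesis
    by (simp add: vimage_def)
qed

lemma emeasure_transport_dirac_ball:
  assumes "F s \<in> borel_measurable borel" and "X \<in> sets borel"
  shows "emeasure (transport F s (dirac_ball x0 R2)) X
    = emeasure lborel ({v. F s (x0, v) \<in> X} \<inter> cball 0 R2)"
proof -
  have "Pair x0 \<in> borel_measurable borel"
    by (intro borel_measurable_continuous_onI continuous_intros)
  moreover have "F s -` X \<in> sets borel"
    using measurable_sets[OF assms] by simp
  ultimately have "emeasure (transport F s (dirac_ball x0 R2)) X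
      = emeasure (density lborel (indicator (cball 0 R2))) {v. F s (x0, v) \<in> X}"
    using assms by (simp add: transport_def dirac_ball_def emeasure_distr vimage_def)
  also have "\<dots> = emeasure lborel ({v. F s (x0, v) \<in> X} \<inter> cball 0 R2)"
    using borel_slice_preimage[OF assms]
    by (subst emeasure_density) (auto simp: Int_commute simp flip: indicator_inter_arith intro: borel_measurable_indicator)
  finally show ?thesis .
qed

lemma emeasure_lborel_bounded_eq_measure:
  fixes X :: "'a::euclidean_space set"
  assumes "X \<in> sets borel" and "bounded X"
  shows "emeasure lborel X = ennreal (measure lebesgue X)"
proof -
  have "emeasure lborel X = emeasure lebesgue X"
    using assms(1) by simp
  also have "\<dots> = ennreal (measure lebesgue X)"
    using assms by (intro emeasure_eq_measure2 bounded_set_imp_lmeasurable) auto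
  finally show ?thesis .
qed

lemma hamiltonian_flow_confined_short_time:
  fixes \<Phi> :: "'a::euclidean_space \<Rightarrow> real"
  assumes flow: "is_hamiltonian_flow \<Phi> F"
    and grad_bound: "\<And>x. x \<in> cball 0 \<rho> \<Longrightarrow> norm (grad \<Phi> x) \<le> M" and "0 \<le> M" and "0 \<le> s"
    and small: "norm (fst z) + s * norm (snd z) + M * s\<^sup>2 < \<rho>"
  shows "\<forall>t\<in>{0..s}. norm (fst (F t z)) < \<rho>"
proof (rule continuous_bound_bootstrap)
  show "continuous_on {0..s} (\<lambda>t. norm (fst (F t z)))"
    by (intro continuous_intros continuous_on_hamiltonian_flow_time[OF flow])
  show "norm (fst (F 0 z)) < \<rho>"
    using small \<open>0 \<le> M\<close> \<open>0 \<le> s\<close> by (simp add: hamiltonian_flow_start[OF flow])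
      (smt (verit, best) mult_nonneg_nonneg norm_ge_zero zero_le_power2)
  fix \<tau> assume \<tau>: "\<tau> \<in> {0..s}" and confined: "\<forall>t\<in>{0..\<tau>}. norm (fst (F t z)) \<le> \<rho>"
  have "norm (fst (F \<tau> z) - fst z - \<tau> *\<^sub>R snd z) \<le> M * \<tau>\<^sup>2"
    using \<tau> confined by (intro hamiltonian_flow_position_estimate[OF flow grad_bound]) auto
  moreover have "\<tau> * norm (snd z) + M * \<tau>\<^sup>2 \<le> s * norm (snd z) + M * s\<^sup>2"
    using \<tau> \<open>0 \<le> M\<close> by (intro add_mono mult_right_mono mult_left_mono power_mono) auto
  ultimately show "norm (fst (F \<tau> z)) < \<rho>"
    using small norm_triangle_ineq[of "fst z + \<tau> *\<^sub>R snd z" "fst (F \<tau> z) - fst z - \<tau> *\<^sub>R snd z"]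
      norm_triangle_ineq[of "fst z" "\<tau> *\<^sub>R snd z"] \<tau>
    by simp
qed

text \<open>Velocities in \<open>cball 0 (3R/s)\<close> move \<open>x0\<close> freely over \<open>cball x0 (3R)\<close> in time \<open>s\<close>; the force
  perturbs this by at most \<open>R/2\<close>, which still covers \<open>cball 0 R\<close> and keeps trajectories inside
  \<open>cball 0 (4R + 1)\<close>.\<close>
context
  fixes \<Phi> :: "'a::euclidean_space \<Rightarrow> real" and F :: "real \<Rightarrow> 'a \<times> 'a \<Rightarrow> 'a \<times> 'a"
    and R K M s :: real and x0 :: 'a
  assumes C2: "C2 \<Phi>" and flow: "is_hamiltonian_flow \<Phi> F" and "0 < R"
    and lip: "K-lipschitz_on (cball 0 (4 * R + 1)) (grad \<Phi>)"
    and grad_bound: "\<And>x. x \<in> cball 0 (4 * R + 1) \<Longrightarrow> norm (grad \<Phi> x) \<le> M" and "0 \<le> M"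
    and s: "0 < s" "s \<le> 1" and small: "M * s\<^sup>2 \<le> min R 1 / 2"
    and x0: "norm x0 \<le> R"
begin

lemma short_time_confined:
  assumes "v \<in> cball 0 (3 * R / s)" and "t \<in> {0..s}"
  shows "norm (fst (F t (x0, v))) \<le> 4 * R + 1"
proof -
  have "s * norm v \<le> 3 * R"
    using assms(1) s by (simp add: field_simps)
  then have "norm (fst (x0, v)) + s * norm (snd (x0, v)) + M * s\<^sup>2 < 4 * R + 1"
    using x0 small by simp
  then have "\<forall>t\<in>{0..s}. norm (fst (F t (x0, v))) < 4 * R + 1"
    using s by (intro hamiltonian_flow_confined_short_time[OF flow _ \<open>0 \<le> M\<close>] grad_bound) auto
  then show ?thesis
    using assms(2) by fastforce
qed

lemma short_time_position_lipschitz: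
  "(exp (1 + K))-lipschitz_on (cball 0 (3 * R / s)) (\<lambda>v. fst (F s (x0, v)))"
proof (rule lipschitz_onI)
  have flow_lip: "(exp ((1 + K) * s))-lipschitz_on (Pair x0 ` cball 0 (3 * R / s)) (F s)"
    using short_time_confined s by (intro hamiltonian_flow_lipschitz_on[OF flow lip]) auto
  fix v w :: 'a assume "v \<in> cball 0 (3 * R / s)" "w \<in> cball 0 (3 * R / s)"
  then have "dist (fst (F s (x0, v))) (fst (F s (x0, w))) \<le> exp ((1 + K) * s) * dist (x0, v) (x0, w)"
    using lipschitz_onD[OF flow_lip] dist_fst_le by (meson imageI order_trans)
  also have "\<dots> \<le> exp (1 + K) * dist v w"
    using s lipschitz_on_nonneg[OF lip] by (intro mult_mono) (auto simp: dist_Pair_Pair mult_left_le)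
  finally show "dist (fst (F s (x0, v))) (fst (F s (x0, w))) \<le> exp (1 + K) * dist v w" .
qed simp

lemma short_time_position_estimate:
  assumes "v \<in> cball 0 (3 * R / s)"
  shows "norm (fst (F s (x0, v)) - x0 - s *\<^sub>R v) \<le> R / 2"
proof -
  have "norm (fst (F s (x0, v)) - fst (x0, v) - s *\<^sub>R snd (x0, v)) \<le> M * s\<^sup>2"
    using short_time_confined[OF assms] s
    by (intro hamiltonian_flow_position_estimate[OF flow] grad_bound) auto
  then show ?thesis
    using small by simp
qed

lemma continuous_short_time_flow: "continuous_on UNIV (F s)"
  using continuous_on_hamiltonian_flow[OF C2 flow] s by simp

lemma short_time_flow_borel: "F s \<in> borel_measurable borel"
  using continuous_short_time_flow by (rule borel_measurable_continuous_onI)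

lemma continuous_short_time_position: "continuous_on UNIV (\<lambda>v. fst (F s (x0, v)))"
proof -
  note continuous_short_time_flow
  moreover have "continuous_on UNIV (\<lambda>v::'a. (x0, v))"
    by (intro continuous_intros)
  ultimately have "continuous_on UNIV (\<lambda>v. F s (x0, v))"
    by (rule continuous_on_compose2) simp
  then show ?thesis
    by (rule continuous_on_fst)
qed

lemma cball_subset_short_time_position_image:
  "cball 0 R \<subseteq> (\<lambda>v. fst (F s (x0, v))) ` cball 0 (3 * R / s)"
proof -
  have "cball 0 R \<subseteq> cball x0 (s * (3 * R / s) - R / 2)"
  proof
    fix y :: 'a assume "y \<in> cball 0 R"
    then have "dist x0 y \<le> 2 * R"
      using x0 norm_triangle_ineq4[of x0 y] by (simp add: dist_norm)
    then show "y \<in> cball x0 (s * (3 * R / s) - R / 2)"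
      using s \<open>0 < R\<close> by simp
  qed
  also have "\<dots> \<subseteq> (\<lambda>v. fst (F s (x0, v))) ` cball 0 (3 * R / s)"
  proof (rule cball_subset_image_near_affine)
    show "continuous_on (cball 0 (3 * R / s)) (\<lambda>v. fst (F s (x0, v)))"
      using continuous_short_time_position by (rule continuous_on_subset) simp
  qed (use \<open>0 < R\<close> s short_time_position_estimate in auto)
  finally show ?thesis .
qed

lemma short_time_velocity_bound:
  assumes "v \<in> cball 0 (3 * R / s)"
  shows "norm (snd (F s (x0, v))) \<le> 3 * R / s + M"
proof -
  have "norm (snd (F s (x0, v)) - snd (x0, v)) \<le> M * s"
    using short_time_confined[OF assms] s
    by (intro hamiltonian_flow_velocity_estimate[where \<tau>=s, OF flow] grad_bound) auto
  also have "\<dots> \<le> M"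
    using s \<open>0 \<le> M\<close> by (simp add: mult_left_le)
  finally show ?thesis
    using assms norm_triangle_sub[of "snd (F s (x0, v))" v] by simp
qed

lemma short_time_position_preimage_borel:
  assumes "A \<in> sets borel"
  shows "{v \<in> cball 0 (3 * R / s). fst (F s (x0, v)) \<in> A} \<in> sets borel"
proof -
  have "(\<lambda>v. fst (F s (x0, v))) \<in> borel_measurable borel"
    using continuous_short_time_position by (rule borel_measurable_continuous_onI)
  from measurable_sets[OF this assms]
  have "cball 0 (3 * R / s) \<inter> (\<lambda>v. fst (F s (x0, v))) -` A \<in> sets borel"
    by auto
  then show ?thesis
    by (auto simp: Int_def conj_commute)
qed

lemma short_time_measure_le:
  assumes "A \<in> sets borel"
  shows "measure lebesgue (A \<inter> cball 0 R)
    \<le> (2 * exp (1 + K) * real DIM('a)) ^ DIM('a) *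
       measure lebesgue {v \<in> cball 0 (3 * R / s). fst (F s (x0, v)) \<in> A}"
proof (rule measure_le_lipschitz_image)
  show "(exp (1 + K))-lipschitz_on {v \<in> cball 0 (3 * R / s). fst (F s (x0, v)) \<in> A} (\<lambda>v. fst (F s (x0, v)))"
    using short_time_position_lipschitz by (rule lipschitz_on_subset) auto
  show "A \<inter> cball 0 R \<in> lmeasurable"
    using assms by (intro bounded_set_imp_lmeasurable) auto
  show "A \<inter> cball 0 R \<subseteq> (\<lambda>v. fst (F s (x0, v))) ` {v \<in> cball 0 (3 * R / s). fst (F s (x0, v)) \<in> A}"
    using cball_subset_short_time_position_image by fastforce
  show "{v \<in> cball 0 (3 * R / s). fst (F s (x0, v)) \<in> A} \<in> lmeasurable"
    using short_time_position_preimage_borel[OF assms]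
    by (intro bounded_set_imp_lmeasurable bounded_subset[OF bounded_cball[of 0 "3 * R / s"]]) auto
  show "bounded {v \<in> cball 0 (3 * R / s). fst (F s (x0, v)) \<in> A}"
    by (rule bounded_subset[OF bounded_cball[of 0 "3 * R / s"]]) auto
qed

lemma short_time_transport_lower_bound:
  assumes A: "A \<in> sets borel" and "3 * R / s \<le> R2" and "3 * R / s + M < R'"
  defines "C \<equiv> (2 * exp (1 + K) * real DIM('a)) ^ DIM('a)"
  shows "ennreal (1 / C) * emeasure lborel (A \<inter> cball 0 R)
    \<le> emeasure (transport F s (dirac_ball x0 R2)) (A \<times> ball 0 R')"
proof -
  define E where "E = {v \<in> cball 0 (3 * R / s). fst (F s (x0, v)) \<in> A}"
  have "C > 0"
    by (simp add: C_def)
  have "emeasure lborel (A \<inter> cball 0 R) = ennreal (measure lebesgue (A \<inter> cball 0 R))"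
    using A by (intro emeasure_lborel_bounded_eq_measure) auto
  then have "ennreal (1 / C) * emeasure lborel (A \<inter> cball 0 R)
      = ennreal (1 / C * measure lebesgue (A \<inter> cball 0 R))"
    using \<open>C > 0\<close> by (simp only: ennreal_mult[symmetric] divide_nonneg_nonneg measure_nonneg less_imp_le zero_le_one)
  also have "\<dots> \<le> ennreal (measure lebesgue E)"
    using short_time_measure_le[OF A] \<open>C > 0\<close> by (intro ennreal_leI) (simp add: E_def C_def field_simps)
  also have "\<dots> = emeasure lborel E"
    unfolding E_def using short_time_position_preimage_borel[OF A]
    by (intro emeasure_lborel_bounded_eq_measure[symmetric] bounded_subset[OF bounded_cball[of 0 "3 * R / s"]]) auto
  also have "\<dots> \<le> emeasure lborel ({v. F s (x0, v) \<in> A \<times> ball 0 R'} \<inter> cball 0 R2)"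
  proof (rule emeasure_mono)
    show "E \<subseteq> {v. F s (x0, v) \<in> A \<times> ball 0 R'} \<inter> cball 0 R2"
      using short_time_velocity_bound assms(2,3) by (fastforce simp: E_def mem_Times_iff)
    show "{v. F s (x0, v) \<in> A \<times> ball 0 R'} \<inter> cball 0 R2 \<in> sets lborel"
      using borel_slice_preimage[OF short_time_flow_borel, of "A \<times> ball 0 R'"] A
      by (auto simp: borel_prod[symmetric])
  qed
  also have "\<dots> = emeasure (transport F s (dirac_ball x0 R2)) (A \<times> ball 0 R')"
    using A by (intro emeasure_transport_dirac_ball[symmetric] short_time_flow_borel) (auto simp: borel_prod[symmetric])
  finally show ?thesis .
qed

end

lemma transport_dirac_ball_uniform_lower_bound:
  fixes \<Phi> :: "'a::euclidean_space \<Rightarrow> real" and F :: "real \<Rightarrow> 'a \<times> 'a \<Rightarrow> 'a \<times> 'a"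
  assumes C2: "C2 \<Phi>" and flow: "is_hamiltonian_flow \<Phi> F" and "0 < R"
    and lip: "K-lipschitz_on (cball 0 (4 * R + 1)) (grad \<Phi>)"
    and grad_bound: "\<And>x. x \<in> cball 0 (4 * R + 1) \<Longrightarrow> norm (grad \<Phi> x) \<le> M" and "0 \<le> M"
    and ab: "0 < a" "a \<le> b" "b \<le> 1" and small: "(M + 1) * b \<le> min R 1 / 2"
  shows "\<exists>\<alpha>>0. \<exists>R'>0. \<exists>R2>0. \<forall>s\<in>{a..b}. \<forall>x0. norm x0 \<le> R \<longrightarrow>
           (\<forall>A\<in>sets borel.
              emeasure (transport F s (dirac_ball x0 R2)) (A \<times> ball 0 R')
                \<ge> ennreal \<alpha> * emeasure lborel (A \<inter> cball 0 R))"
proof -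
  define C where "C = (2 * exp (1 + K) * real DIM('a)) ^ DIM('a)"
  have "1 / C > 0" "3 * R / a > 0" "3 * R / a + M + 1 > 0"
    using \<open>0 < R\<close> \<open>0 \<le> M\<close> ab by (simp_all add: C_def add_pos_nonneg)
  moreover have "\<forall>s\<in>{a..b}. \<forall>x0. norm x0 \<le> R \<longrightarrow> (\<forall>A\<in>sets borel.
      emeasure (transport F s (dirac_ball x0 (3 * R / a))) (A \<times> ball 0 (3 * R / a + M + 1))
        \<ge> ennreal (1 / C) * emeasure lborel (A \<inter> cball 0 R))"
  proof (intro ballI allI impI)
    fix s and x0 :: 'a and A :: "'a set"
    assume s: "s \<in> {a..b}" and x0: "norm x0 \<le> R" and A: "A \<in> sets borel"
    have "s\<^sup>2 \<le> s * 1"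
      unfolding power2_eq_square using s ab by (intro mult_left_mono) auto
    then have "s\<^sup>2 \<le> b"
      using s by simp
    then have "M * s\<^sup>2 \<le> (M + 1) * b"
      using \<open>0 \<le> M\<close> by (intro mult_mono) auto
    moreover have "3 * R / s \<le> 3 * R / a"
      using s ab \<open>0 < R\<close> by (intro divide_left_mono) auto
    ultimately show "emeasure (transport F s (dirac_ball x0 (3 * R / a))) (A \<times> ball 0 (3 * R / a + M + 1))
        \<ge> ennreal (1 / C) * emeasure lborel (A \<inter> cball 0 R)"
      unfolding C_def using s ab small
      by (intro short_time_transport_lower_bound[OF C2 flow \<open>0 < R\<close> lip grad_bound \<open>0 \<le> M\<close> _ _ _ x0 A]) auto
  qed
  ultimately show ?thesis
    by blast
qed

lemma transport_dirac_ball_lower_bounds_before: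
  fixes \<Phi> :: "'a::euclidean_space \<Rightarrow> real" and F :: "real \<Rightarrow> 'a \<times> 'a \<Rightarrow> 'a \<times> 'a"
  assumes C2: "C2 \<Phi>" and flow: "is_hamiltonian_flow \<Phi> F" and "0 < R"
    and lip: "K-lipschitz_on (cball 0 (4 * R + 1)) (grad \<Phi>)"
    and grad_bound: "\<And>x. x \<in> cball 0 (4 * R + 1) \<Longrightarrow> norm (grad \<Phi> x) \<le> M" and "0 \<le> M"
    and t1: "t1 \<le> 1" "(M + 1) * t1 \<le> min R 1 / 2"
  shows "(\<forall>s. 0 < s \<and> s < t1 \<longrightarrow>
        (\<exists>\<alpha>>0. \<exists>R'>0. \<exists>R2>0. \<forall>x0. norm x0 \<le> R \<longrightarrow>
           (\<forall>A\<in>sets borel.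
              emeasure (transport F s (dirac_ball x0 R2)) (A \<times> ball 0 R')
                \<ge> ennreal \<alpha> * emeasure lborel (A \<inter> cball 0 R)))) \<and>
     (\<forall>a b. 0 < a \<and> a \<le> b \<and> b < t1 \<longrightarrow>
        (\<exists>\<alpha>>0. \<exists>R'>0. \<exists>R2>0. \<forall>s\<in>{a..b}. \<forall>x0. norm x0 \<le> R \<longrightarrow>
           (\<forall>A\<in>sets borel.
              emeasure (transport F s (dirac_ball x0 R2)) (A \<times> ball 0 R')
                \<ge> ennreal \<alpha> * emeasure lborel (A \<inter> cball 0 R))))"
    (is "(\<forall>s. _ \<longrightarrow> ?single s) \<and> (\<forall>a b. _ \<longrightarrow> ?interval a b)")
proof (intro conjI allI impI)
  show interval: "?interval a b" if ab: "0 < a \<and> a \<le> b \<and> b < t1" for a b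
  proof (rule transport_dirac_ball_uniform_lower_bound[OF C2 flow \<open>0 < R\<close> lip grad_bound \<open>0 \<le> M\<close>])
    have "(M + 1) * b \<le> (M + 1) * t1"
      using ab \<open>0 \<le> M\<close> by (intro mult_left_mono) auto
    then show "(M + 1) * b \<le> min R 1 / 2"
      using t1(2) by linarith
  qed (use ab t1 in auto)
  show "?single s" if "0 < s \<and> s < t1" for s
    using interval[of s s] that unfolding atLeastAtMost_singleton by (simp only: ball_simps order_refl simp_thms)
qed

theorem mainTheorem9:
  fixes \<Phi> :: "'a::euclidean_space \<Rightarrow> real"
    and F :: "real \<Rightarrow> 'a \<times> 'a \<Rightarrow> 'a \<times> 'a"
    and R :: real
  assumes "C2 \<Phi>"
    and "bdd_below (range \<Phi>)"
    and "is_hamiltonian_flow \<Phi> F"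
    and "R > 0"
  shows "\<exists>t1>0.
     (\<forall>s. 0 < s \<and> s < t1 \<longrightarrow>
        (\<exists>\<alpha>>0. \<exists>R'>0. \<exists>R2>0. \<forall>x0. norm x0 \<le> R \<longrightarrow>
           (\<forall>A\<in>sets borel.
              emeasure (transport F s (dirac_ball x0 R2)) (A \<times> ball 0 R')
                \<ge> ennreal \<alpha> * emeasure lborel (A \<inter> cball 0 R)))) \<and>
     (\<forall>a b. 0 < a \<and> a \<le> b \<and> b < t1 \<longrightarrow>
        (\<exists>\<alpha>>0. \<exists>R'>0. \<exists>R2>0. \<forall>s\<in>{a..b}. \<forall>x0. norm x0 \<le> R \<longrightarrow>
           (\<forall>A\<in>sets borel.
              emeasure (transport F s (dirac_ball x0 R2)) (A \<times> ball 0 R')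
                \<ge> ennreal \<alpha> * emeasure lborel (A \<inter> cball 0 R))))"
proof -
  \<comment> \<open>\<open>bdd_below (range \<Phi>)\<close> is unused: in the paper it makes the flow global, which is assumed here.\<close>
  obtain K where lip: "K-lipschitz_on (cball 0 (4 * R + 1)) (grad \<Phi>)"
    using C2_grad_lipschitz_on_cball[OF \<open>C2 \<Phi>\<close>] .
  obtain M where "M \<ge> 0" and grad_bound: "\<And>x. x \<in> cball 0 (4 * R + 1) \<Longrightarrow> norm (grad \<Phi> x) \<le> M"
    using C2_grad_bounded_on_cball[OF \<open>C2 \<Phi>\<close>] by blast
  define t1 where "t1 = min 1 (min R 1 / (2 * (M + 1)))"
  have cancel: "(M + 1) * (c / (2 * (M + 1))) = c / 2" for c
    using \<open>M \<ge> 0\<close> by (simp add: field_simps)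
  have "(M + 1) * t1 \<le> (M + 1) * (min R 1 / (2 * (M + 1)))"
    using \<open>M \<ge> 0\<close> by (intro mult_left_mono) (auto simp: t1_def)
  also have "\<dots> = min R 1 / 2"
    by (rule cancel)
  finally have "(M + 1) * t1 \<le> min R 1 / 2" .
  moreover have "t1 > 0" "t1 \<le> 1"
    using \<open>R > 0\<close> \<open>M \<ge> 0\<close> by (simp_all add: t1_def)
  ultimately show ?thesis
    by (intro exI[of _ t1] conjI transport_dirac_ball_lower_bounds_before[OF \<open>C2 \<Phi>\<close>
          \<open>is_hamiltonian_flow \<Phi> F\<close> \<open>R > 0\<close> lip grad_bound \<open>M \<ge> 0\<close>])
qed

end
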